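(* Let $\Phi$ be an extremal instance and fix a resampling table $(\omega_{i,j})$. Suppose that, for some sequence of choices of false clauses, $\mathrm{PRS}(\Phi,\mathcal D)$ run on this table terminates with a certain transcript. Then, for every other sequence of choices of false clauses, $\mathrm{PRS}(\Phi,\mathcal D)$ run on the same table also terminates, and it terminates with the same transcript, after the same number of iterations.
   Context: Setting: For $i\in[n]$, $X_i$ takes values in a countable set $D_i$ equipped with a probability distribution $\mathcal D_i$; $\mathcal D=\mathcal D_1\times\cdots\times\mathcal D_n$ is the product distribution. A formula $\Phi=\phi_1\wedge\cdots\wedge\phi_m$ is a conjunction of clauses. Each clause $\phi_k$ is a Boolean function of the variables $X_i$ with $i\in\mathrm{Scp}(\phi_k)$, where $\mathrm{Scp}(\phi_k)\subseteq[n]$ is a nonempty set called the scope of $\phi_k$. The instance $\Phi$ is extremal if for all $1\le k<\ell\le m$ with $\mathrm{Scp}(\phi_k)\cap\mathrm{Scp}(\phi_\ell)\neq\emptyset$, the formula $\phi_k\vee\phi_\ell$ is true under every assignment. Algorithm $\mathrm{PRS}(\Phi,\mathcal D)$: sample $\mathbf X$ from $\mathcal D$. While $\Phi(\mathbf X)$ is false, choose any clause $\phi_k$ false under the current $\mathbf X$ and resample all $X_i$, $i\in\mathrm{Scp}(\phi_k)$, from $\mathcal D_i$. Resampling table: an array $(\omega_{i,j}: i\in[n],\ j\in\{0,1,2,\dots\})$ with each $\omega_{i,j}\in D_i$. Running PRS on the table means the following. Let $j(i,0)=0$ and $X_i^0=\omega_{i,0}$. In iteration $t$, where the scope $\mathrm{Scp}(\phi_{k_t})$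 of a clause $\phi_{k_t}$ false at time $t-1$ is resampled, set $j(i,t)=j(i,t-1)+1$ for $i\in\mathrm{Scp}(\phi_{k_t})$ and $j(i,t)=j(i,t-1)$ otherwise, and let $X_i^t=\omega_{i,j(i,t)}$. Thus only the choice of clauses remains free. The frontier at time $t$ is $F(t)=(j(1,t),\dots,j(n,t))$. Each iteration $t$ creates a resampling block $\{(i,j(i,t-1)): i\in\mathrm{Scp}(\phi_{k_t})\}$; these blocks partition $\{(i,j): j<j(i,t)\}$. The transcript at time $t$ is the frontier $F(t)$ together with this partition into resampling blocks. *)

theory Defs
  imports Main "HOL-Library.Countable_Set"
begin

(* Variables are indexed by i < n (i.e. [n] = {0..<n}); clauses by k < m.
   A clause k has scope scp k :: nat set and Boolean function phi k on
   assignments (nat => 'a).  A run of PRS on the table is determined by the list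
   ks of chosen clauses, ks ! (t-1) = k_t. *)

definition frontier :: "(nat \<Rightarrow> nat set) \<Rightarrow> nat list \<Rightarrow> nat \<Rightarrow> nat" where
  "frontier scp ks i = length (filter (\<lambda>k. i \<in> scp k) ks)"

definition cur_state :: "(nat \<Rightarrow> nat \<Rightarrow> 'a) \<Rightarrow> (nat \<Rightarrow> nat set) \<Rightarrow> nat list \<Rightarrow> nat \<Rightarrow> 'a" where
  "cur_state omega scp ks = (\<lambda>i. omega i (frontier scp ks i))"

definition formula_holds :: "nat \<Rightarrow> (nat \<Rightarrow> (nat \<Rightarrow> 'a) \<Rightarrow> bool) \<Rightarrow> (nat \<Rightarrow> 'a) \<Rightarrow> bool" where
  "formula_holds m phi x \<longleftrightarrow> (\<forall>k<m. phi k x)"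

definition valid_choices :: "nat \<Rightarrow> (nat \<Rightarrow> (nat \<Rightarrow> 'a) \<Rightarrow> bool) \<Rightarrow> (nat \<Rightarrow> nat set)
    \<Rightarrow> (nat \<Rightarrow> nat \<Rightarrow> 'a) \<Rightarrow> nat list \<Rightarrow> bool" where
  "valid_choices m phi scp omega ks \<longleftrightarrow>
     (\<forall>t < length ks. ks ! t < m \<and> \<not> phi (ks ! t) (cur_state omega scp (take t ks)))"

definition terminated_run :: "nat \<Rightarrow> (nat \<Rightarrow> (nat \<Rightarrow> 'a) \<Rightarrow> bool) \<Rightarrow> (nat \<Rightarrow> nat set)
    \<Rightarrow> (nat \<Rightarrow> nat \<Rightarrow> 'a) \<Rightarrow> nat list \<Rightarrow> bool" where
  "terminated_run m phi scp omega ks \<longleftrightarrow>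
     valid_choices m phi scp omega ks \<and> formula_holds m phi (cur_state omega scp ks)"

definition res_blocks :: "(nat \<Rightarrow> nat set) \<Rightarrow> nat list \<Rightarrow> (nat \<times> nat) set set" where
  "res_blocks scp ks =
     {{(i, frontier scp (take t ks) i) | i. i \<in> scp (ks ! t)} | t. t < length ks}"

definition transcript :: "(nat \<Rightarrow> nat set) \<Rightarrow> nat list \<Rightarrow> (nat \<Rightarrow> nat) \<times> (nat \<times> nat) set set" where
  "transcript scp ks = (frontier scp ks, res_blocks scp ks)"

definition extremal :: "nat \<Rightarrow> (nat \<Rightarrow> 'a set) \<Rightarrow> nat \<Rightarrow> (nat \<Rightarrow> (nat \<Rightarrow> 'a) \<Rightarrow> bool)
    \<Rightarrow> (nat \<Rightarrow> nat set) \<Rightarrow> bool" where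
  "extremal n D m phi scp \<longleftrightarrow>
     (\<forall>k l. k < l \<and> l < m \<and> scp k \<inter> scp l \<noteq> {} \<longrightarrow>
        (\<forall>x. (\<forall>i<n. x i \<in> D i) \<longrightarrow> phi k x \<or> phi l x))"

end

theory Submission
  imports Defs
begin

text \<open>On a fixed table, PRS is a deterministic labelled transition system on transcripts:
  choosing clause k advances the frontier on the scope of k and adds one resampling block.
  In an extremal instance two distinct clauses that are false at the same time have disjoint
  scopes, so the two resampling steps commute and neither makes the other clause true.
  This local diamond property forces all maximal runs from a state admitting one terminating
  run to terminate, with the same length and the same final state.\<close>

fun enabled_path :: "('s \<Rightarrow> 'l \<Rightarrow> bool) \<Rightarrow> ('s \<Rightarrow> 'l \<Rightarrow> 's) \<Rightarrow> 's \<Rightarrow> 'l list \<Rightarrow> bool" where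
  "enabled_path enabled step s [] = True"
| "enabled_path enabled step s (k # ks) \<longleftrightarrow> enabled s k \<and> enabled_path enabled step (step s k) ks"

definition terminal :: "('s \<Rightarrow> 'l \<Rightarrow> bool) \<Rightarrow> 's \<Rightarrow> bool" where
  "terminal enabled s \<longleftrightarrow> (\<forall>k. \<not> enabled s k)"

lemma enabled_path_append:
  "enabled_path enabled step s (xs @ ys) \<longleftrightarrow>
     enabled_path enabled step s xs \<and> enabled_path enabled step (foldl step s xs) ys"
  by (induction xs arbitrary: s) auto

lemma terminal_path_exists:
  assumes "\<And>ks. enabled_path enabled step s ks \<Longrightarrow> length ks \<le> B"
  shows "\<exists>ks. enabled_path enabled step s ks \<and> terminal enabled (foldl step s ks)"
  using assms
proof (induction B arbitrary: s)
  case 0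
  have "terminal enabled s"
    unfolding terminal_def using "0.prems"[of "[_]"] by auto
  then show ?case by (intro exI[of _ "[]"]) simp
next
  case (Suc B)
  show ?case
  proof (cases "terminal enabled s")
    case True
    then show ?thesis by (intro exI[of _ "[]"]) simp
  next
    case False
    then obtain k where k: "enabled s k" unfolding terminal_def by blast
    have "length ks \<le> B" if "enabled_path enabled step (step s k) ks" for ks
      using Suc.prems[of "k # ks"] k that by simp
    then obtain ks where "enabled_path enabled step (step s k) ks"
        "terminal enabled (foldl step (step s k) ks)"
      using Suc.IH by blast
    with k show ?thesis by (intro exI[of _ "k # ks"]) simp
  qed
qed

theorem diamond_terminal_paths:
  assumes diamond: "\<And>s k l. enabled s k \<Longrightarrow> enabled s l \<Longrightarrow> k \<noteq> l \<Longrightarrow>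
      enabled (step s k) l \<and> step (step s k) l = step (step s l) k"
    and path0: "enabled_path enabled step s ks0"
    and terminal0: "terminal enabled (foldl step s ks0)"
    and path: "enabled_path enabled step s ks"
  shows "length ks \<le> length ks0 \<and>
    (terminal enabled (foldl step s ks) \<longrightarrow>
       foldl step s ks = foldl step s ks0 \<and> length ks = length ks0)"
  using path0 terminal0 path
proof (induction "length ks0" arbitrary: s ks0 ks)
  case 0
  then have "terminal enabled s" by simp
  with "0.prems"(3) have "ks = []"
    by (cases ks) (auto simp: terminal_def)
  with "0.hyps" show ?case by simp
next
  case (Suc n)
  obtain k ks0' where ks0: "ks0 = k # ks0'" and len0: "n = length ks0'"
    using Suc.hyps(2) by (cases ks0) auto
  have k: "enabled s k" and path0': "enabled_path enabled step (step s k) ks0'"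
    and terminal0': "terminal enabled (foldl step (step s k) ks0')"
    using Suc.prems unfolding ks0 by simp_all
  note IH_k = Suc.hyps(1)[OF len0 path0' terminal0']
  show ?case
  proof (cases ks)
    case Nil
    with k show ?thesis by (auto simp: terminal_def)
  next
    case (Cons l ks')
    have l: "enabled s l" and path': "enabled_path enabled step (step s l) ks'"
      using Suc.prems(3) unfolding Cons by simp_all
    show ?thesis
    proof (cases "k = l")
      case True
      show ?thesis
        using IH_k[of ks'] path' unfolding Cons ks0 True len0 by simp
    next
      case False
      \<comment> \<open>Complete l to a terminating path l # t from step s k; by induction it ends where
        ks0 does, and k # t is then a terminating path from step s l of length n.\<close>
      have swap: "enabled (step s k) l" "enabled (step s l) k"
          "step (step s k) l = step (step s l) k"
        using diamond[OF k l False] diamond[OF l k] False by auto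
      have bounded: "length ks \<le> n - 1" if "enabled_path enabled step (step (step s k) l) ks" for ks
        using IH_k[of "l # ks"] swap(1) that len0 by auto
      obtain t where t: "enabled_path enabled step (step (step s k) l) t"
          "terminal enabled (foldl step (step (step s k) l) t)"
        using terminal_path_exists[of enabled step _ "n - 1"] bounded by blast
      then have lt: "n = length (k # t)"
          "foldl step (step s k) (l # t) = foldl step (step s k) ks0'"
        using IH_k[of "l # t"] swap(1) len0 by simp_all
      have path_kt: "enabled_path enabled step (step s l) (k # t)"
        and terminal_kt: "terminal enabled (foldl step (step s l) (k # t))"
        using t swap by simp_all
      show ?thesis
        using Suc.hyps(1)[OF lt(1) path_kt terminal_kt path'] lt swap(3) len0
        unfolding Cons ks0 by auto
    qed
  qed
qed

fun resample :: "(nat \<Rightarrow> nat set) \<Rightarrow> (nat \<Rightarrow> nat) \<times> (nat \<times> nat) set set \<Rightarrow> nat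
    \<Rightarrow> (nat \<Rightarrow> nat) \<times> (nat \<times> nat) set set" where
  "resample scp (F, B) k =
     (\<lambda>i. F i + (if i \<in> scp k then 1 else 0), insert {(i, F i) | i. i \<in> scp k} B)"

lemma res_blocks_snoc:
  "res_blocks scp (xs @ [k]) = insert {(i, frontier scp xs i) | i. i \<in> scp k} (res_blocks scp xs)"
proof -
  have "{..<length (xs @ [k])} = insert (length xs) {..<length xs}" by auto
  moreover have "res_blocks scp ys =
      (\<lambda>t. {(i, frontier scp (take t ys) i) | i. i \<in> scp (ys ! t)}) ` {..<length ys}" for ys
    unfolding res_blocks_def by auto
  moreover have "(\<lambda>t. {(i, frontier scp (take t (xs @ [k])) i) | i. i \<in> scp ((xs @ [k]) ! t)})
      ` {..<length xs} = (\<lambda>t. {(i, frontier scp (take t xs) i) | i. i \<in> scp (xs ! t)}) ` {..<length xs}"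
    by (rule image_cong) (auto simp: nth_append)
  ultimately show ?thesis
    by simp
qed

lemma transcript_snoc: "transcript scp (xs @ [k]) = resample scp (transcript scp xs) k"
  by (simp add: transcript_def res_blocks_snoc frontier_def fun_eq_iff)

lemma transcript_foldl: "transcript scp ks = foldl (resample scp) (transcript scp []) ks"
  by (induction ks rule: rev_induct) (simp_all add: transcript_snoc)

lemma resample_commute:
  assumes "scp k \<inter> scp l = {}"
  shows "resample scp (resample scp s k) l = resample scp (resample scp s l) k"
proof (cases s)
  case (Pair F B)
  have "{(i, F i + (if i \<in> scp k then 1 else 0)) | i. i \<in> scp l} = {(i, F i) | i. i \<in> scp l}"
    "{(i, F i + (if i \<in> scp l then 1 else 0)) | i. i \<in> scp k} = {(i, F i) | i. i \<in> scp k}"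
    using assms by auto
  then show ?thesis
    using Pair by (simp add: fun_eq_iff insert_commute)
qed

definition false_clause :: "nat \<Rightarrow> (nat \<Rightarrow> (nat \<Rightarrow> 'a) \<Rightarrow> bool) \<Rightarrow> (nat \<Rightarrow> nat \<Rightarrow> 'a)
    \<Rightarrow> (nat \<Rightarrow> nat) \<times> 'b \<Rightarrow> nat \<Rightarrow> bool" where
  "false_clause m phi omega s k \<longleftrightarrow> k < m \<and> \<not> phi k (\<lambda>i. omega i (fst s i))"

lemma cur_state_transcript: "cur_state omega scp xs = (\<lambda>i. omega i (fst (transcript scp xs) i))"
  by (simp add: cur_state_def transcript_def)

lemma valid_choices_snoc:
  "valid_choices m phi scp omega (xs @ [k]) \<longleftrightarrow>
    valid_choices m phi scp omega xs \<and> k < m \<and> \<not> phi k (cur_state omega scp xs)"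
  unfolding valid_choices_def by (auto simp: nth_append less_Suc_eq)

lemma valid_choices_iff_enabled_path:
  "valid_choices m phi scp omega ks \<longleftrightarrow>
     enabled_path (false_clause m phi omega) (resample scp) (transcript scp []) ks"
proof (induction ks rule: rev_induct)
  case Nil
  then show ?case by (simp add: valid_choices_def)
next
  case (snoc k ks)
  then show ?case
    by (simp add: valid_choices_snoc enabled_path_append false_clause_def cur_state_transcript
        transcript_foldl[of scp ks, symmetric])
qed

lemma terminated_run_iff_terminal:
  "terminated_run m phi scp omega ks \<longleftrightarrow>
     enabled_path (false_clause m phi omega) (resample scp) (transcript scp []) ks \<and>
     terminal (false_clause m phi omega) (foldl (resample scp) (transcript scp []) ks)"
  by (auto simp: terminated_run_def valid_choices_iff_enabled_path terminal_def formula_holds_def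
      false_clause_def cur_state_transcript transcript_foldl[of scp ks, symmetric])

lemma extremal_false_clauses_disjoint:
  assumes ext: "extremal n D m phi scp" and table: "\<And>i j. i < n \<Longrightarrow> omega i j \<in> D i"
    and k: "false_clause m phi omega s k" and l: "false_clause m phi omega s l" and "k \<noteq> l"
  shows "scp k \<inter> scp l = {}"
proof -
  have "\<forall>i<n. omega i (fst s i) \<in> D i" using table by blast
  with ext k l \<open>k \<noteq> l\<close> show ?thesis
    unfolding extremal_def false_clause_def by (metis inf_commute linorder_neqE_nat)
qed

lemma false_clause_resample_disjoint:
  assumes local_dep: "\<And>x y. l < m \<Longrightarrow> (\<forall>i\<in>scp l. x i = y i) \<Longrightarrow> phi l x = phi l y"
    and "scp k \<inter> scp l = {}"
  shows "false_clause m phi omega (resample scp s k) l \<longleftrightarrow> false_clause m phi omega s l"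
proof (cases s)
  case (Pair F B)
  have "phi l (\<lambda>i. omega i (F i + (if i \<in> scp k then 1 else 0))) = phi l (\<lambda>i. omega i (F i))"
    if "l < m" by (rule local_dep[OF that]) (use assms(2) in auto)
  then show ?thesis
    using Pair by (auto simp: false_clause_def)
qed

theorem lemma2:
  fixes n m :: nat
    and D :: "nat \<Rightarrow> 'a set"
    and scp :: "nat \<Rightarrow> nat set"
    and phi :: "nat \<Rightarrow> (nat \<Rightarrow> 'a) \<Rightarrow> bool"
    and omega :: "nat \<Rightarrow> nat \<Rightarrow> 'a"
    and ks0 :: "nat list"
  assumes countable: "\<And>i. i < n \<Longrightarrow> countable (D i)"
    and scope: "\<And>k. k < m \<Longrightarrow> scp k \<noteq> {} \<and> scp k \<subseteq> {..<n}"
    and local_dep: "\<And>k x y. k < m \<Longrightarrow> (\<forall>i\<in>scp k. x i = y i) \<Longrightarrow> phi k x = phi k y"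
    and table: "\<And>i j. i < n \<Longrightarrow> omega i j \<in> D i"
    and ext: "extremal n D m phi scp"
    and run0: "terminated_run m phi scp omega ks0"
  shows "(\<forall>ks. valid_choices m phi scp omega ks \<longrightarrow> length ks \<le> length ks0)
       \<and> (\<forall>ks. terminated_run m phi scp omega ks \<longrightarrow>
              transcript scp ks = transcript scp ks0 \<and> length ks = length ks0)"
proof -
  let ?enabled = "false_clause m phi omega" and ?s0 = "transcript scp []"
  have diamond: "?enabled (resample scp s k) l \<and>
      resample scp (resample scp s k) l = resample scp (resample scp s l) k"
    if "?enabled s k" "?enabled s l" "k \<noteq> l" for s k l
  proof -
    have disjoint: "scp k \<inter> scp l = {}"
      using extremal_false_clauses_disjoint[OF ext table that] .
    have "?enabled (resample scp s k) l"
      using false_clause_resample_disjoint[where phi = phi and l = l, OF local_dep disjoint] that(2)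
      by simp
    with resample_commute[OF disjoint] show ?thesis by simp
  qed
  have "enabled_path ?enabled (resample scp) ?s0 ks0"
    and "terminal ?enabled (foldl (resample scp) ?s0 ks0)"
    using run0 by (simp_all add: terminated_run_iff_terminal)
  note paths = diamond_terminal_paths[OF diamond this]
  show ?thesis
  proof (intro conjI allI impI)
    fix ks
    assume "valid_choices m phi scp omega ks"
    then show "length ks \<le> length ks0"
      using paths by (simp add: valid_choices_iff_enabled_path)
  next
    fix ks
    assume "terminated_run m phi scp omega ks"
    then show "transcript scp ks = transcript scp ks0" "length ks = length ks0"
      using paths unfolding terminated_run_iff_terminal transcript_foldl[of scp ks]
        transcript_foldl[of scp ks0] by simp_all
  qed
qed

end
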